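(* Every conditional space $\mathfrak{X}=\langle X,\tau,T\rangle$ is isomorphic to the expanded Stone space $\langle\mathrm{Ul}(\mathrm{Clop}(\tau)),\tau_s,T_{\mathrm{Clop}(\tau)}\rangle$ of the conditional algebra $\langle\mathrm{Clop}(\tau),\to_T\rangle$, via the map $\varepsilon\colon X\to\mathrm{Ul}(\mathrm{Clop}(\tau))$, $\varepsilon(x)=\{U\in\mathrm{Clop}(\tau):x\in U\}$; that is, $\varepsilon$ is a homeomorphism and for all $x,y\in X$ and $Z\subseteq X$, $T(x,Z,y)$ iff $T_{\mathrm{Clop}(\tau)}(\varepsilon(x),\varepsilon[Z],\varepsilon(y))$.
   Context: A conditional space is a triple $\langle X,\tau,T\rangle$ where $\langle X,\tau\rangle$ is a Boolean (compact, Hausdorff, zero-dimensional) space and $T\subseteq X\times\mathcal{C}(\tau)\times X$ ($\mathcal{C}(\tau)$ the closed sets, $\mathrm{Clop}(\tau)$ the clopen sets) satisfies: (T1) for every $x$ and closed $Y$, $T(x,Y)=\{y:T(x,Y,y)\}$ is closed; (T2) for all clopen $U,V$, $U\to_T V=\{x:\text{for all closed } Z\subseteq U,\ T(x,Z)\subseteq V\}$ is clopen; (T3) for closed $Y$: $T(x,Y,y)$ iff $T(x,U,y)$ for all clopen $U\supseteq Y$. Then $\langle\mathrm{Clop}(\tau),\to_T\rangle$ is a conditional algebra. For a conditional algebra $\langle A,\to\rangle$ (Boolean algebra $A$ with $a\to1=1$, $(a\to b)\wedge(a\to c)=a\to(b\wedge c)$, $(a\vee b)\to c\le(a\to c)\wedge(b\to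 c)$): $\mathrm{Ul}(A)$ is its Stone space with topology $\tau_s$; filters include $A$ itself; $\varphi(F)=\{u:F\subseteq u\}$; $D^{\to}_u(F)=\{b:\exists a\in F,\ a\to b\in u\}$; and $T_A(u,Z,v)$ iff there is a filter $F$ with $Z=\varphi(F)$ and $D^{\to}_u(F)\subseteq v$. *)

theory Defs
  imports "HOL-Analysis.Analysis"
begin

definition boolean_space :: "'a topology \<Rightarrow> bool" where
  "boolean_space \<tau> \<longleftrightarrow> compact_space \<tau> \<and> Hausdorff_space \<tau> \<and> \<tau> dim_le 0"

definition Clop :: "'a topology \<Rightarrow> 'a set set" where
  "Clop \<tau> = {U. closedin \<tau> U \<and> openin \<tau> U}"

definition Tsec :: "('a \<Rightarrow> 'a set \<Rightarrow> 'a \<Rightarrow> bool) \<Rightarrow> 'a \<Rightarrow> 'a set \<Rightarrow> 'a set" where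
  "Tsec T x Y = {y. T x Y y}"

definition arrowT :: "'a topology \<Rightarrow> ('a \<Rightarrow> 'a set \<Rightarrow> 'a \<Rightarrow> bool) \<Rightarrow> 'a set \<Rightarrow> 'a set \<Rightarrow> 'a set" where
  "arrowT \<tau> T U V = {x \<in> topspace \<tau>. \<forall>Z. closedin \<tau> Z \<and> Z \<subseteq> U \<longrightarrow> Tsec T x Z \<subseteq> V}"

definition conditional_space :: "'a topology \<Rightarrow> ('a \<Rightarrow> 'a set \<Rightarrow> 'a \<Rightarrow> bool) \<Rightarrow> bool" where
  "conditional_space \<tau> T \<longleftrightarrow>
     boolean_space \<tau> \<and>
     (\<forall>x Y y. T x Y y \<longrightarrow> x \<in> topspace \<tau> \<and> closedin \<tau> Y \<and> y \<in> topspace \<tau>) \<and>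
     (\<forall>x Y. x \<in> topspace \<tau> \<and> closedin \<tau> Y \<longrightarrow> closedin \<tau> (Tsec T x Y)) \<and>
     (\<forall>U V. U \<in> Clop \<tau> \<and> V \<in> Clop \<tau> \<longrightarrow> arrowT \<tau> T U V \<in> Clop \<tau>) \<and>
     (\<forall>x Y y. closedin \<tau> Y \<longrightarrow>
        (T x Y y \<longleftrightarrow> (\<forall>U. U \<in> Clop \<tau> \<and> Y \<subseteq> U \<longrightarrow> T x U y)))"

text \<open>A Boolean algebra of subsets of X (here Clop tau, top element X, meet = inter).
  Filters (the improper filter A itself is allowed).\<close>
definition is_filter :: "'a set \<Rightarrow> 'a set set \<Rightarrow> 'a set set \<Rightarrow> bool" where
  "is_filter X A F \<longleftrightarrow> F \<subseteq> A \<and> X \<in> F \<and>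
     (\<forall>a b. a \<in> F \<and> b \<in> A \<and> a \<subseteq> b \<longrightarrow> b \<in> F) \<and>
     (\<forall>a b. a \<in> F \<and> b \<in> F \<longrightarrow> a \<inter> b \<in> F)"

definition is_ultrafilter :: "'a set \<Rightarrow> 'a set set \<Rightarrow> 'a set set \<Rightarrow> bool" where
  "is_ultrafilter X A u \<longleftrightarrow> is_filter X A u \<and> u \<noteq> A \<and>
     (\<forall>G. is_filter X A G \<and> G \<noteq> A \<and> u \<subseteq> G \<longrightarrow> G = u)"

definition Ul :: "'a set \<Rightarrow> 'a set set \<Rightarrow> 'a set set set" where
  "Ul X A = {u. is_ultrafilter X A u}"

definition stone_topology :: "'a set \<Rightarrow> 'a set set \<Rightarrow> 'a set set topology" where
  "stone_topology X A = topology_generated_by ((\<lambda>a. {u \<in> Ul X A. a \<in> u}) ` A)"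

definition phi :: "'a set \<Rightarrow> 'a set set \<Rightarrow> 'a set set \<Rightarrow> 'a set set set" where
  "phi X A F = {u \<in> Ul X A. F \<subseteq> u}"

definition Dto :: "'a set set \<Rightarrow> ('a set \<Rightarrow> 'a set \<Rightarrow> 'a set) \<Rightarrow> 'a set set \<Rightarrow> 'a set set \<Rightarrow> 'a set set" where
  "Dto A imp u F = {b \<in> A. \<exists>a \<in> F. imp a b \<in> u}"

definition T_alg :: "'a set \<Rightarrow> 'a set set \<Rightarrow> ('a set \<Rightarrow> 'a set \<Rightarrow> 'a set)
    \<Rightarrow> 'a set set \<Rightarrow> 'a set set set \<Rightarrow> 'a set set \<Rightarrow> bool" where
  "T_alg X A imp u Z v \<longleftrightarrow> (\<exists>F. is_filter X A F \<and> Z = phi X A F \<and> Dto A imp u F \<subseteq> v)"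

definition eps :: "'a topology \<Rightarrow> 'a \<Rightarrow> 'a set set" where
  "eps \<tau> x = {U \<in> Clop \<tau>. x \<in> U}"

end

theory Submission
  imports Defs
begin

(* By compactness every
   ultrafilter of clopens consists of the clopen neighbourhoods of some point, which is
   unique since the space is Hausdorff and zero-dimensional; zero-dimensionality also makes
   eps open, so eps is a homeomorphism onto the Stone space. Likewise every filter F of
   clopens is the set of clopen supersets of the closed set Inter F, and phi(F) is the
   image of Inter F under eps. Hence T_Clop(eps x, eps[Z], eps y) says that Z is closed
   and D_(eps x)(F) is contained in eps y for the filter F of clopen supersets of Z, and
   by (T3) it remains to see, for clopen a, that T(x,a,y) holds iff y lies in every
   clopen b with x in a ->_T b. If not T(x,a,y), the closed set T(x,a) is separated from
   y by a clopen b, and x lies in a ->_T b because (T3) makes T(x,-) monotone on closed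
   subsets of a. *)

lemma Clop_closedin: "U \<in> Clop \<tau> \<Longrightarrow> closedin \<tau> U"
  and Clop_openin: "U \<in> Clop \<tau> \<Longrightarrow> openin \<tau> U"
  and Clop_subset_topspace: "U \<in> Clop \<tau> \<Longrightarrow> U \<subseteq> topspace \<tau>"
  unfolding Clop_def by (auto dest: closedin_subset)

lemma topspace_in_Clop: "topspace \<tau> \<in> Clop \<tau>"
  and empty_in_Clop: "{} \<in> Clop \<tau>"
  and Clop_Int: "U \<in> Clop \<tau> \<Longrightarrow> V \<in> Clop \<tau> \<Longrightarrow> U \<inter> V \<in> Clop \<tau>"
  and Clop_Diff: "U \<in> Clop \<tau> \<Longrightarrow> topspace \<tau> - U \<in> Clop \<tau>"
  unfolding Clop_def by auto

lemma boolean_spaceD: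
  assumes "boolean_space \<tau>"
  shows boolean_space_compact_space: "compact_space \<tau>"
    and boolean_space_Hausdorff_space: "Hausdorff_space \<tau>"
    and boolean_space_dim_le_0: "\<tau> dim_le 0"
  using assms unfolding boolean_space_def by blast+

lemma zero_dim_clopen_nbhd:
  assumes "\<tau> dim_le 0" "openin \<tau> W" "x \<in> W"
  obtains V where "V \<in> Clop \<tau>" "x \<in> V" "V \<subseteq> W"
proof -
  have "neighbourhood_base_of (\<lambda>U. closedin \<tau> U \<and> openin \<tau> U) \<tau>"
    using assms(1) dimension_le_0_neighbourhood_base_of_clopen by blast
  then show thesis
    using assms(2,3) that unfolding neighbourhood_base_of Clop_def by blast
qed

lemma zero_dim_separate_closed:
  assumes "\<tau> dim_le 0" "closedin \<tau> C" "y \<in> topspace \<tau>" "y \<notin> C"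
  obtains V where "V \<in> Clop \<tau>" "C \<subseteq> V" "y \<notin> V"
proof -
  obtain W where "W \<in> Clop \<tau>" "y \<in> W" "W \<subseteq> topspace \<tau> - C"
    using zero_dim_clopen_nbhd[OF assms(1), of "topspace \<tau> - C" y] assms by blast
  then show thesis
    using that[of "topspace \<tau> - W"] Clop_Diff closedin_subset[OF assms(2)] by blast
qed

lemma t1_zero_dim_separate_points:
  assumes "t1_space \<tau>" "\<tau> dim_le 0" "x \<in> topspace \<tau>" "y \<in> topspace \<tau>" "x \<noteq> y"
  obtains V where "V \<in> Clop \<tau>" "x \<in> V" "y \<notin> V"
proof -
  have "closedin \<tau> {x}"
    using t1_space_closedin_singleton[THEN iffD1, OF assms(1)] assms(3) by blast
  then show thesis
    using zero_dim_separate_closed[OF assms(2) _ assms(4)] assms(5) that by blast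
qed

lemma zero_dim_Inter_clopen_supersets:
  assumes "\<tau> dim_le 0" "closedin \<tau> C"
  shows "\<Inter>{U \<in> Clop \<tau>. C \<subseteq> U} = C"
proof
  show "\<Inter>{U \<in> Clop \<tau>. C \<subseteq> U} \<subseteq> C"
  proof
    fix y assume y: "y \<in> \<Inter>{U \<in> Clop \<tau>. C \<subseteq> U}"
    then have "y \<in> topspace \<tau>"
      using topspace_in_Clop closedin_subset[OF assms(2)] by blast
    with y show "y \<in> C"
      using zero_dim_separate_closed[OF assms] by blast
  qed
qed blast

lemma is_filterD:
  assumes "is_filter X A F"
  shows is_filter_subset: "F \<subseteq> A"
    and is_filter_top: "X \<in> F"
    and is_filter_upward: "a \<in> F \<Longrightarrow> b \<in> A \<Longrightarrow> a \<subseteq> b \<Longrightarrow> b \<in> F"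
    and is_filter_Int: "a \<in> F \<Longrightarrow> b \<in> F \<Longrightarrow> a \<inter> b \<in> F"
  using assms unfolding is_filter_def by blast+

lemma is_filter_Inter_finite:
  assumes "is_filter X A F" "finite G" "G \<subseteq> F"
  shows "X \<inter> \<Inter>G \<in> F"
  using assms(2,3)
proof (induction G rule: finite_induct)
  case empty
  then show ?case using is_filter_top[OF assms(1)] by simp
next
  case (insert a G)
  then have "a \<inter> (X \<inter> \<Inter>G) \<in> F" using is_filter_Int[OF assms(1)] by simp
  then show ?case by (simp add: Int_left_commute)
qed

lemma is_filter_empty_imp_improper:
  assumes "is_filter X A F" "{} \<in> F"
  shows "F = A"
  using is_filterD[OF assms(1)] assms(2) by blast

lemma is_ultrafilterD:
  assumes "is_ultrafilter X A u"
  shows is_ultrafilter_filter: "is_filter X A u"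
    and is_ultrafilter_proper: "u \<noteq> A"
    and is_ultrafilter_maximal: "is_filter X A G \<Longrightarrow> G \<noteq> A \<Longrightarrow> u \<subseteq> G \<Longrightarrow> G = u"
  using assms unfolding is_ultrafilter_def by blast+

lemma compact_space_clopen_filter_mem:
  assumes "compact_space \<tau>" "is_filter (topspace \<tau>) (Clop \<tau>) F"
    and "a \<in> Clop \<tau>" "\<Inter>F \<subseteq> a"
  shows "a \<in> F"
proof -
  have "compactin \<tau> (topspace \<tau> - a)"
    using assms(1,3) Clop_Diff Clop_closedin closedin_compact_space by blast
  moreover have "\<forall>C\<in>F. closedin \<tau> C"
    using is_filter_subset[OF assms(2)] Clop_closedin by blast
  moreover have "(topspace \<tau> - a) \<inter> \<Inter>F = {}"
    using assms(4) by blast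
  ultimately obtain G where G: "finite G" "G \<subseteq> F" "(topspace \<tau> - a) \<inter> \<Inter>G = {}"
    unfolding compactin_fip by blast
  then have "topspace \<tau> \<inter> \<Inter>G \<in> F" "topspace \<tau> \<inter> \<Inter>G \<subseteq> a"
    using is_filter_Inter_finite[OF assms(2)] by blast+
  then show ?thesis
    using is_filter_upward[OF assms(2)] assms(3) by blast
qed

lemma compact_space_clopen_filter_eq_supersets:
  assumes "compact_space \<tau>" "is_filter (topspace \<tau>) (Clop \<tau>) F"
  shows "F = {U \<in> Clop \<tau>. \<Inter>F \<subseteq> U}"
  using compact_space_clopen_filter_mem[OF assms] is_filter_subset[OF assms(2)] by blast

lemma clopen_filter_Inter_closedin:
  assumes "is_filter (topspace \<tau>) (Clop \<tau>) F"
  shows "closedin \<tau> (\<Inter>F)"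
  using is_filter_top[OF assms] is_filter_subset[OF assms]
  by (intro closedin_Inter) (auto intro: Clop_closedin)

lemma clopen_supersets_filter:
  assumes "Z \<subseteq> topspace \<tau>"
  shows "is_filter (topspace \<tau>) (Clop \<tau>) {U \<in> Clop \<tau>. Z \<subseteq> U}"
  using assms topspace_in_Clop Clop_Int unfolding is_filter_def by auto

lemma eps_ultrafilter:
  assumes "x \<in> topspace \<tau>"
  shows "is_ultrafilter (topspace \<tau>) (Clop \<tau>) (eps \<tau> x)"
proof -
  have filter: "is_filter (topspace \<tau>) (Clop \<tau>) (eps \<tau> x)"
    using assms topspace_in_Clop Clop_Int unfolding is_filter_def eps_def by auto
  have "G \<subseteq> eps \<tau> x"
    if G: "is_filter (topspace \<tau>) (Clop \<tau>) G" "G \<noteq> Clop \<tau>" "eps \<tau> x \<subseteq> G" for G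
  proof
    fix U assume "U \<in> G"
    then have "U \<in> Clop \<tau>"
      using is_filter_subset[OF G(1)] by blast
    have "topspace \<tau> - U \<notin> G"
    proof
      assume "topspace \<tau> - U \<in> G"
      then have "U \<inter> (topspace \<tau> - U) \<in> G"
        by (rule is_filter_Int[OF G(1) \<open>U \<in> G\<close>])
      then have "{} \<in> G"
        by (simp add: Int_Diff)
      then show False
        using is_filter_empty_imp_improper[OF G(1)] G(2) by blast
    qed
    then show "U \<in> eps \<tau> x"
      using G(3) assms Clop_Diff[OF \<open>U \<in> Clop \<tau>\<close>] \<open>U \<in> Clop \<tau>\<close> unfolding eps_def by blast
  qed
  moreover have "eps \<tau> x \<noteq> Clop \<tau>"
    using empty_in_Clop unfolding eps_def by blast
  ultimately show ?thesis
    using filter unfolding is_ultrafilter_def by (blast intro: subset_antisym)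
qed

lemma compact_space_ultrafilter_eq_eps:
  assumes "compact_space \<tau>" "is_ultrafilter (topspace \<tau>) (Clop \<tau>) u"
  obtains x where "x \<in> topspace \<tau>" "u = eps \<tau> x"
proof -
  note filter = is_ultrafilter_filter[OF assms(2)]
  have "\<not> \<Inter>u \<subseteq> {}"
    using compact_space_clopen_filter_mem[OF assms(1) filter empty_in_Clop]
      is_filter_empty_imp_improper[OF filter] is_ultrafilter_proper[OF assms(2)]
    by blast
  then obtain x where "x \<in> \<Inter>u" by blast
  then have x: "x \<in> topspace \<tau>" and "u \<subseteq> eps \<tau> x"
    using is_filterD[OF filter] unfolding eps_def by auto
  then have "eps \<tau> x = u"
    using is_ultrafilterD(1,2)[OF eps_ultrafilter[OF x]]
    by (intro is_ultrafilter_maximal[OF assms(2)])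
  with x show thesis using that by blast
qed

lemma compact_space_eps_image:
  assumes "compact_space \<tau>"
  shows "eps \<tau> ` topspace \<tau> = Ul (topspace \<tau>) (Clop \<tau>)"
proof
  show "eps \<tau> ` topspace \<tau> \<subseteq> Ul (topspace \<tau>) (Clop \<tau>)"
    by (auto intro: eps_ultrafilter simp: Ul_def)
  show "Ul (topspace \<tau>) (Clop \<tau>) \<subseteq> eps \<tau> ` topspace \<tau>"
    using compact_space_ultrafilter_eq_eps[OF assms] unfolding Ul_def by (metis imageI mem_Collect_eq subsetI)
qed

lemma boolean_space_inj_on_eps:
  assumes "boolean_space \<tau>"
  shows "inj_on (eps \<tau>) (topspace \<tau>)"
proof
  fix x y assume xy: "x \<in> topspace \<tau>" "y \<in> topspace \<tau>" "eps \<tau> x = eps \<tau> y"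
  have t1: "t1_space \<tau>"
    by (rule Hausdorff_imp_t1_space[OF boolean_space_Hausdorff_space[OF assms]])
  show "x = y"
  proof (rule ccontr)
    assume "x \<noteq> y"
    then obtain V where "V \<in> Clop \<tau>" "x \<in> V" "y \<notin> V"
      using t1_zero_dim_separate_points[OF t1 boolean_space_dim_le_0[OF assms] xy(1,2)] by blast
    then show False
      using xy(3) unfolding eps_def by blast
  qed
qed

lemma topspace_stone_topology: "topspace (stone_topology X A) = Ul X A"
proof -
  have "X \<in> u" "u \<subseteq> A" if "u \<in> Ul X A" for u
    using that is_filterD(1,2)[OF is_ultrafilter_filter, of X A u] unfolding Ul_def by auto
  then show ?thesis
    unfolding stone_topology_def topology_generated_by_topspace by blast
qed

lemma eps_image_clopen:
  assumes "compact_space \<tau>" "a \<in> Clop \<tau>"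
  shows "eps \<tau> ` a = {u \<in> Ul (topspace \<tau>) (Clop \<tau>). a \<in> u}"
  using compact_space_eps_image[OF assms(1)] Clop_subset_topspace[OF assms(2)] assms(2)
  unfolding eps_def by blast

lemma compact_space_continuous_map_eps:
  assumes "compact_space \<tau>"
  shows "continuous_map \<tau> (stone_topology (topspace \<tau>) (Clop \<tau>)) (eps \<tau>)"
  unfolding stone_topology_def
proof (rule continuous_on_generated_topo)
  let ?basic = "\<lambda>a. {u \<in> Ul (topspace \<tau>) (Clop \<tau>). a \<in> u}"
  fix U assume "U \<in> ?basic ` Clop \<tau>"
  then obtain a where "a \<in> Clop \<tau>" "U = ?basic a" by blast
  then have "eps \<tau> -` U \<inter> topspace \<tau> = a"
    using compact_space_eps_image[OF assms] Clop_subset_topspace[OF \<open>a \<in> Clop \<tau>\<close>]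
    unfolding eps_def by blast
  then show "openin \<tau> (eps \<tau> -` U \<inter> topspace \<tau>)"
    using Clop_openin \<open>a \<in> Clop \<tau>\<close> by simp
next
  show "eps \<tau> ` topspace \<tau> \<subseteq> \<Union> ((\<lambda>a. {u \<in> Ul (topspace \<tau>) (Clop \<tau>). a \<in> u}) ` Clop \<tau>)"
    using compact_space_eps_image[OF assms] topspace_stone_topology[of "topspace \<tau>" "Clop \<tau>"]
    unfolding stone_topology_def by simp
qed

lemma compact_zero_dim_open_map_eps:
  assumes "compact_space \<tau>" "\<tau> dim_le 0"
  shows "open_map \<tau> (stone_topology (topspace \<tau>) (Clop \<tau>)) (eps \<tau>)"
  unfolding open_map_def
proof (intro allI impI)
  fix U assume "openin \<tau> U"
  then have "U = \<Union>{V \<in> Clop \<tau>. V \<subseteq> U}"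
    using zero_dim_clopen_nbhd[OF assms(2)] by blast
  then have "eps \<tau> ` U = (\<Union>V \<in> {V \<in> Clop \<tau>. V \<subseteq> U}. eps \<tau> ` V)"
    by blast
  also have "\<dots> = (\<Union>V \<in> {V \<in> Clop \<tau>. V \<subseteq> U}. {u \<in> Ul (topspace \<tau>) (Clop \<tau>). V \<in> u})"
    using eps_image_clopen[OF assms(1)] by simp
  finally show "openin (stone_topology (topspace \<tau>) (Clop \<tau>)) (eps \<tau> ` U)"
    unfolding stone_topology_def by (auto intro: topology_generated_by_Basis)
qed

lemma boolean_space_homeomorphic_map_eps:
  assumes "boolean_space \<tau>"
  shows "homeomorphic_map \<tau> (stone_topology (topspace \<tau>) (Clop \<tau>)) (eps \<tau>)"
proof (rule bijective_open_imp_homeomorphic_map)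
  have compact: "compact_space \<tau>"
    by (rule boolean_space_compact_space[OF assms])
  show "continuous_map \<tau> (stone_topology (topspace \<tau>) (Clop \<tau>)) (eps \<tau>)"
    by (rule compact_space_continuous_map_eps[OF compact])
  show "open_map \<tau> (stone_topology (topspace \<tau>) (Clop \<tau>)) (eps \<tau>)"
    by (rule compact_zero_dim_open_map_eps[OF compact boolean_space_dim_le_0[OF assms]])
  show "eps \<tau> ` topspace \<tau> = topspace (stone_topology (topspace \<tau>) (Clop \<tau>))"
    unfolding topspace_stone_topology by (rule compact_space_eps_image[OF compact])
  show "inj_on (eps \<tau>) (topspace \<tau>)"
    by (rule boolean_space_inj_on_eps[OF assms])
qed

lemma compact_space_phi_clopen_filter:
  assumes "compact_space \<tau>" "is_filter (topspace \<tau>) (Clop \<tau>) F"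
  shows "phi (topspace \<tau>) (Clop \<tau>) F = eps \<tau> ` \<Inter>F"
proof -
  have "phi (topspace \<tau>) (Clop \<tau>) F = {u \<in> eps \<tau> ` topspace \<tau>. F \<subseteq> u}"
    unfolding phi_def compact_space_eps_image[OF assms(1)] ..
  also have "\<dots> = eps \<tau> ` {x \<in> topspace \<tau>. F \<subseteq> eps \<tau> x}"
    by blast
  also have "{x \<in> topspace \<tau>. F \<subseteq> eps \<tau> x} = \<Inter>F"
    using is_filterD(1,2)[OF assms(2)] unfolding eps_def by blast
  finally show ?thesis .
qed

lemma boolean_space_eps_image_eq_phi_iff:
  assumes "boolean_space \<tau>" "is_filter (topspace \<tau>) (Clop \<tau>) F" "Z \<subseteq> topspace \<tau>"
  shows "eps \<tau> ` Z = phi (topspace \<tau>) (Clop \<tau>) F \<longleftrightarrow> Z = \<Inter>F"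
proof -
  have "\<Inter>F \<subseteq> topspace \<tau>"
    using is_filter_top[OF assms(2)] by blast
  then show ?thesis
    using compact_space_phi_clopen_filter[OF boolean_space_compact_space[OF assms(1)] assms(2)] assms(3)
      inj_on_image_eq_iff[OF boolean_space_inj_on_eps[OF assms(1)]] by simp
qed

lemma conditional_spaceD:
  assumes "conditional_space \<tau> T"
  shows conditional_space_boolean_space: "boolean_space \<tau>"
    and conditional_space_Tsec_closedin:
      "x \<in> topspace \<tau> \<Longrightarrow> closedin \<tau> Y \<Longrightarrow> closedin \<tau> (Tsec T x Y)"
    and conditional_space_arrowT_Clop:
      "U \<in> Clop \<tau> \<Longrightarrow> V \<in> Clop \<tau> \<Longrightarrow> arrowT \<tau> T U V \<in> Clop \<tau>"
    and conditional_space_T_iff_clopen_supersets: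
      "T x Z y \<longleftrightarrow> closedin \<tau> Z \<and> (\<forall>U \<in> Clop \<tau>. Z \<subseteq> U \<longrightarrow> T x U y)"
proof -
  show "boolean_space \<tau>" "x \<in> topspace \<tau> \<Longrightarrow> closedin \<tau> Y \<Longrightarrow> closedin \<tau> (Tsec T x Y)"
    "U \<in> Clop \<tau> \<Longrightarrow> V \<in> Clop \<tau> \<Longrightarrow> arrowT \<tau> T U V \<in> Clop \<tau>"
    using assms unfolding conditional_space_def by simp_all
  have "T x Z y \<Longrightarrow> closedin \<tau> Z" and
    "closedin \<tau> Z \<Longrightarrow> T x Z y \<longleftrightarrow> (\<forall>U. U \<in> Clop \<tau> \<and> Z \<subseteq> U \<longrightarrow> T x U y)"
    using assms unfolding conditional_space_def by blast+
  then show "T x Z y \<longleftrightarrow> closedin \<tau> Z \<and> (\<forall>U \<in> Clop \<tau>. Z \<subseteq> U \<longrightarrow> T x U y)"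
    by blast
qed

lemma conditional_space_T_clopen_iff:
  assumes "conditional_space \<tau> T" "x \<in> topspace \<tau>" "y \<in> topspace \<tau>" "a \<in> Clop \<tau>"
  shows "T x a y \<longleftrightarrow> (\<forall>b \<in> Clop \<tau>. x \<in> arrowT \<tau> T a b \<longrightarrow> y \<in> b)"
proof
  assume "T x a y"
  then show "\<forall>b \<in> Clop \<tau>. x \<in> arrowT \<tau> T a b \<longrightarrow> y \<in> b"
    using Clop_closedin[OF assms(4)] unfolding arrowT_def Tsec_def by blast
next
  assume arrow: "\<forall>b \<in> Clop \<tau>. x \<in> arrowT \<tau> T a b \<longrightarrow> y \<in> b"
  show "T x a y"
  proof (rule ccontr)
    assume "\<not> T x a y"
    moreover have "closedin \<tau> (Tsec T x a)"
      using conditional_space_Tsec_closedin[OF assms(1,2) Clop_closedin[OF assms(4)]] .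
    ultimately obtain b where b: "b \<in> Clop \<tau>" "Tsec T x a \<subseteq> b" "y \<notin> b"
      using zero_dim_separate_closed[OF boolean_space_dim_le_0[OF conditional_space_boolean_space[OF assms(1)]] _ assms(3)]
      unfolding Tsec_def by blast
    have "Tsec T x W \<subseteq> Tsec T x a" if "W \<subseteq> a" for W
      using conditional_space_T_iff_clopen_supersets[OF assms(1)] assms(4) that
      unfolding Tsec_def by blast
    then have "x \<in> arrowT \<tau> T a b"
      using assms(2) b(2) unfolding arrowT_def by blast
    then show False
      using arrow b by blast
  qed
qed

lemma conditional_space_Dto_eps_subset_iff:
  assumes "conditional_space \<tau> T" "x \<in> topspace \<tau>" "y \<in> topspace \<tau>" "F \<subseteq> Clop \<tau>"
  shows "Dto (Clop \<tau>) (arrowT \<tau> T) (eps \<tau> x) F \<subseteq> eps \<tau> y \<longleftrightarrow> (\<forall>a \<in> F. T x a y)"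
proof -
  have "arrowT \<tau> T a b \<in> Clop \<tau>" if "a \<in> F" "b \<in> Clop \<tau>" for a b
    using conditional_space_arrowT_Clop[OF assms(1)] assms(4) that by blast
  then have "Dto (Clop \<tau>) (arrowT \<tau> T) (eps \<tau> x) F = {b \<in> Clop \<tau>. \<exists>a \<in> F. x \<in> arrowT \<tau> T a b}"
    unfolding Dto_def eps_def by blast
  then have "Dto (Clop \<tau>) (arrowT \<tau> T) (eps \<tau> x) F \<subseteq> eps \<tau> y \<longleftrightarrow>
      (\<forall>a \<in> F. \<forall>b \<in> Clop \<tau>. x \<in> arrowT \<tau> T a b \<longrightarrow> y \<in> b)"
    unfolding eps_def by blast
  also have "\<dots> \<longleftrightarrow> (\<forall>a \<in> F. T x a y)"
    using conditional_space_T_clopen_iff[OF assms(1-3)] assms(4) by (simp add: subset_iff)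
  finally show ?thesis .
qed

lemma conditional_space_T_alg_eps_iff:
  assumes "conditional_space \<tau> T" "x \<in> topspace \<tau>" "y \<in> topspace \<tau>" "Z \<subseteq> topspace \<tau>"
  shows "T_alg (topspace \<tau>) (Clop \<tau>) (arrowT \<tau> T) (eps \<tau> x) (eps \<tau> ` Z) (eps \<tau> y) \<longleftrightarrow> T x Z y"
proof -
  have boolean: "boolean_space \<tau>"
    by (rule conditional_space_boolean_space[OF assms(1)])
  have "T_alg (topspace \<tau>) (Clop \<tau>) (arrowT \<tau> T) (eps \<tau> x) (eps \<tau> ` Z) (eps \<tau> y) \<longleftrightarrow>
      (\<exists>F. is_filter (topspace \<tau>) (Clop \<tau>) F \<and> Z = \<Inter>F \<and> (\<forall>a \<in> F. T x a y))"
    unfolding T_alg_def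
  proof (intro ex_cong1 conj_cong refl)
    fix F assume F: "is_filter (topspace \<tau>) (Clop \<tau>) F"
    show "eps \<tau> ` Z = phi (topspace \<tau>) (Clop \<tau>) F \<longleftrightarrow> Z = \<Inter>F"
      by (rule boolean_space_eps_image_eq_phi_iff[OF boolean F assms(4)])
    show "Dto (Clop \<tau>) (arrowT \<tau> T) (eps \<tau> x) F \<subseteq> eps \<tau> y \<longleftrightarrow> (\<forall>a \<in> F. T x a y)"
      by (rule conditional_space_Dto_eps_subset_iff[OF assms(1-3) is_filter_subset[OF F]])
  qed
  also have "\<dots> \<longleftrightarrow> closedin \<tau> Z \<and> (\<forall>a \<in> Clop \<tau>. Z \<subseteq> a \<longrightarrow> T x a y)"
  proof
    assume "\<exists>F. is_filter (topspace \<tau>) (Clop \<tau>) F \<and> Z = \<Inter>F \<and> (\<forall>a \<in> F. T x a y)"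
    then obtain F where F: "is_filter (topspace \<tau>) (Clop \<tau>) F" "Z = \<Inter>F" "\<forall>a \<in> F. T x a y"
      by blast
    then have "F = {a \<in> Clop \<tau>. Z \<subseteq> a}"
      using compact_space_clopen_filter_eq_supersets[OF boolean_space_compact_space[OF boolean] F(1)] by simp
    then show "closedin \<tau> Z \<and> (\<forall>a \<in> Clop \<tau>. Z \<subseteq> a \<longrightarrow> T x a y)"
      using F clopen_filter_Inter_closedin[OF F(1)] by auto
  next
    assume "closedin \<tau> Z \<and> (\<forall>a \<in> Clop \<tau>. Z \<subseteq> a \<longrightarrow> T x a y)"
    then show "\<exists>F. is_filter (topspace \<tau>) (Clop \<tau>) F \<and> Z = \<Inter>F \<and> (\<forall>a \<in> F. T x a y)"
      using clopen_supersets_filter[OF assms(4)] zero_dim_Inter_clopen_supersets[OF boolean_space_dim_le_0[OF boolean]]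
      by (intro exI[of _ "{a \<in> Clop \<tau>. Z \<subseteq> a}"]) auto
  qed
  also have "\<dots> \<longleftrightarrow> T x Z y"
    by (rule conditional_space_T_iff_clopen_supersets[OF assms(1), symmetric])
  finally show ?thesis .
qed

theorem theorem5p8:
  fixes \<tau> :: "'a topology" and T :: "'a \<Rightarrow> 'a set \<Rightarrow> 'a \<Rightarrow> bool"
  assumes "conditional_space \<tau> T"
  shows "homeomorphic_map \<tau> (stone_topology (topspace \<tau>) (Clop \<tau>)) (eps \<tau>)
    \<and> (\<forall>x \<in> topspace \<tau>. \<forall>y \<in> topspace \<tau>. \<forall>Z. Z \<subseteq> topspace \<tau> \<longrightarrow>
         (T x Z y \<longleftrightarrow> T_alg (topspace \<tau>) (Clop \<tau>) (arrowT \<tau> T) (eps \<tau> x) (eps \<tau> ` Z) (eps \<tau> y)))"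
  using boolean_space_homeomorphic_map_eps[OF conditional_space_boolean_space[OF assms]]
    conditional_space_T_alg_eps_iff[OF assms] by blast

end
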